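(* Let $m,\Delta$ be positive integers, $X\subseteq\{-\Delta,\dots,\Delta\}^m$ and $x\in X$ such that $-x\in\mathrm{cone}(X\setminus\{x\})$. Then there is $\lambda\in\mathbb{Z}_{\ge0}^X$ with $\lambda_x>0$, at most $m+1$ non-zero components, $\|\lambda\|_\infty\le\Delta^m m^{m/2}$, and \[ -\lambda_x x=\sum_{y\in X\setminus\{x\}}\lambda_y y. \]
   Context: $\mathrm{cone}(Y)=\{\sum_{y\in Y}\lambda_y y:\lambda_y\ge0\}$. *)

theory Defs
  imports "HOL-Analysis.Analysis"
begin

definition pcone :: "('a::real_vector) set \<Rightarrow> 'a set" where
  "pcone Y = {(\<Sum>y\<in>Y. c y *\<^sub>R y) | c. \<forall>y\<in>Y. c y \<ge> 0}"

end

theory Submission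
  imports Defs
begin

text \<open>
  By Caratheodory's theorem for cones, \<open>-x\<close> is a nonnegative combination of a linearly
  independent set \<open>Y \<subseteq> X - {x}\<close>. Completing \<open>Y\<close> by unit vectors to a basis gives a nonsingular
  integer matrix \<open>M\<close> with entries bounded by \<open>\<Delta>\<close> and a vector \<open>d \<ge> 0\<close>, supported on the
  columns from \<open>Y\<close>, with \<open>M d = -x\<close>. By Cramer's rule each \<open>det M \<cdot> d\<^sub>k\<close> is the determinant
  of \<open>M\<close> with one column replaced by \<open>-x\<close>, an integer matrix with entries bounded by \<open>\<Delta>\<close>.
  So scaling the combination by \<open>|det M|\<close> makes all coefficients nonnegative integers, and
  Hadamard's inequality bounds each of them by \<open>\<Delta>\<^sup>m m\<^bsup>m/2\<^esup>\<close>.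
\<close>

lemma finite_vector:
  fixes B :: "'n::finite \<Rightarrow> 'a set"
  assumes "\<And>i. finite (B i)"
  shows "finite {V. \<forall>i::'n. V $ i \<in> B i}"
proof -
  have "vec_nth ` {V. \<forall>i. V $ i \<in> B i} \<subseteq> Pi\<^sub>E UNIV B"
    by auto
  then have "finite (vec_nth ` {V. \<forall>i. V $ i \<in> B i})"
    using assms by (meson finite_PiE finite_subset finite_class.finite_UNIV)
  then show ?thesis
    by (rule finite_imageD) (simp add: inj_on_def vec_eq_iff)
qed

lemma finite_bounded_integer_vectors:
  "finite {v :: real^'n. \<forall>i. v $ i \<in> \<int> \<and> \<bar>v $ i\<bar> \<le> D}"
proof -
  have "finite {v :: real^'n. \<forall>i. v $ i \<in> {k \<in> \<int>. \<bar>k\<bar> \<le> D}}"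
    by (rule finite_vector) (rule finite_abs_int_segment)
  then show ?thesis
    by simp
qed

lemma real_nat_floor_Ints: "r \<in> \<int> \<Longrightarrow> r \<ge> 0 \<Longrightarrow> real (nat \<lfloor>r\<rfloor>) = r"
  by (auto elim!: Ints_cases)

lemma nonneg_combination_remove_dependent:
  fixes S :: "'a::real_vector set"
  assumes "finite S" "dependent S" "\<forall>y\<in>S. c y \<ge> 0"
  obtains y0 c' where "y0 \<in> S" "\<forall>y\<in>S - {y0}. c' y \<ge> 0"
    "(\<Sum>y\<in>S - {y0}. c' y *\<^sub>R y) = (\<Sum>y\<in>S. c y *\<^sub>R y)"
proof -
  obtain u0 w where w: "w \<in> S" "u0 w \<noteq> 0" and u0: "(\<Sum>y\<in>S. u0 y *\<^sub>R y) = 0"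
    using dependent_finite[OF assms(1)] assms(2) by auto
  define u where "u y = u0 y / u0 w" for y
  have "(\<Sum>y\<in>S. u y *\<^sub>R y) = (1 / u0 w) *\<^sub>R (\<Sum>y\<in>S. u0 y *\<^sub>R y)"
    by (simp add: u_def scaleR_sum_right)
  then have u: "(\<Sum>y\<in>S. u y *\<^sub>R y) = 0"
    using u0 by simp
  define P where "P = {y\<in>S. u y > 0}"
  have P: "finite P" "P \<noteq> {}"
    using assms(1) w by (auto simp: P_def u_def)
  define y0 where "y0 = arg_min_on (\<lambda>y. c y / u y) P"
  have y0: "y0 \<in> P"
    unfolding y0_def using P by (rule arg_min_if_finite(1))
  have min: "c y0 / u y0 \<le> c y / u y" if "y \<in> P" for y
    unfolding y0_def using P that by (rule arg_min_least)
  define t where "t = c y0 / u y0"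
  define c' where "c' y = c y - t * u y" for y
  have t: "t \<ge> 0"
    using y0 assms(3) by (auto simp: t_def P_def)
  have c'_nonneg: "c' y \<ge> 0" if "y \<in> S" for y
  proof (cases "u y > 0")
    case True
    then show ?thesis
      using min[of y] that by (simp add: c'_def t_def P_def field_simps)
  next
    case False
    then have "t * u y \<le> 0"
      using t by (simp add: mult_nonneg_nonpos)
    moreover have "c y \<ge> 0"
      using that assms(3) by blast
    ultimately show ?thesis
      by (simp add: c'_def)
  qed
  have "(\<Sum>y\<in>S. c' y *\<^sub>R y) = (\<Sum>y\<in>S. c y *\<^sub>R y) - t *\<^sub>R (\<Sum>y\<in>S. u y *\<^sub>R y)"
    by (simp add: c'_def scaleR_diff_left sum_subtractf scaleR_sum_right)
  also have "\<dots> = (\<Sum>y\<in>S. c y *\<^sub>R y)"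
    using u by simp
  finally have c'_sum: "(\<Sum>y\<in>S. c' y *\<^sub>R y) = (\<Sum>y\<in>S. c y *\<^sub>R y)" .
  have "c' y0 = 0"
    using y0 by (simp add: c'_def t_def P_def)
  then have "(\<Sum>y\<in>S - {y0}. c' y *\<^sub>R y) = (\<Sum>y\<in>S. c' y *\<^sub>R y)"
    using assms(1) by (intro sum.mono_neutral_left) auto
  moreover have "y0 \<in> S"
    using y0 by (simp add: P_def)
  ultimately show ?thesis
    using c'_nonneg c'_sum by (intro that[of y0 c']) auto
qed

lemma conic_caratheodory:
  fixes S :: "'a::real_vector set"
  assumes "finite S" "\<forall>y\<in>S. c y \<ge> 0"
  obtains Y c' where "Y \<subseteq> S" "independent Y" "\<forall>y\<in>Y. c' y \<ge> 0"
    "(\<Sum>y\<in>Y. c' y *\<^sub>R y) = (\<Sum>y\<in>S. c y *\<^sub>R y)"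
proof -
  have "\<exists>Y c'. Y \<subseteq> S \<and> independent Y \<and> (\<forall>y\<in>Y. c' y \<ge> 0) \<and>
      (\<Sum>y\<in>Y. c' y *\<^sub>R y) = (\<Sum>y\<in>S. c y *\<^sub>R y)"
    using assms
  proof (induction S arbitrary: c rule: finite_psubset_induct)
    case (psubset S)
    show ?case
    proof (cases "independent S")
      case True
      then show ?thesis
        using psubset.prems by blast
    next
      case False
      then have "dependent S"
        by simp
      obtain y0 c' where y0: "y0 \<in> S" and c': "\<forall>y\<in>S - {y0}. c' y \<ge> 0"
        and eq: "(\<Sum>y\<in>S - {y0}. c' y *\<^sub>R y) = (\<Sum>y\<in>S. c y *\<^sub>R y)"
        using nonneg_combination_remove_dependent[OF psubset.hyps(1) \<open>dependent S\<close> psubset.prems] .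
      have "S - {y0} \<subset> S"
        using y0 by blast
      from psubset.IH[OF this c'] obtain Y c2 where "Y \<subseteq> S - {y0}" "independent Y"
        "\<forall>y\<in>Y. c2 y \<ge> 0" "(\<Sum>y\<in>Y. c2 y *\<^sub>R y) = (\<Sum>y\<in>S - {y0}. c' y *\<^sub>R y)"
        by auto
      then show ?thesis
        using eq by (intro exI[of _ Y] exI[of _ c2]) auto
    qed
  qed
  then show ?thesis
    using that by blast
qed

lemma det_orthogonalize_row:
  fixes A :: "real^'n^'n"
  assumes "a \<notin> S"
  obtains B where "det B = det A" "norm (B$a) \<le> norm (A$a)" "\<And>k. k \<noteq> a \<Longrightarrow> B$k = A$k"
    "\<And>j. j \<in> S \<Longrightarrow> orthogonal (B$a) (A$j)"
proof -
  let ?W = "{A$j | j. j \<in> S}"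
  obtain y z where y: "y \<in> span ?W" and z: "\<And>w. w \<in> span ?W \<Longrightarrow> orthogonal z w"
    and yz: "A$a = y + z"
    using orthogonal_subspace_decomp_exists by blast
  define B where "B = (\<chi> k. if k = a then row a A + - y else row k A)"
  have row: "row k A = A$k" for k
    by (simp add: row_def vec_eq_iff)
  have "span ?W \<subseteq> span {row j A | j. j \<noteq> a}"
    using assms by (intro span_mono) (auto simp: row)
  then have "- y \<in> vec.span {row j A | j. j \<noteq> a}"
    using y by (auto simp: span_vec_eq span_neg)
  then have "det B = det A"
    unfolding B_def by (rule det_row_span)
  moreover have Ba: "B$a = z"
    using yz by (simp add: B_def row)
  moreover have "norm z \<le> norm (A$a)"
  proof -
    have "orthogonal y z"
      using z[OF y] by (simp add: orthogonal_commute)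
    then have "(norm (A$a))\<^sup>2 = (norm y)\<^sup>2 + (norm z)\<^sup>2"
      using yz by (simp add: norm_add_Pythagorean)
    then have "(norm z)\<^sup>2 \<le> (norm (A$a))\<^sup>2"
      by simp
    then show ?thesis
      by (rule power2_le_imp_le) simp
  qed
  moreover have "B$k = A$k" if "k \<noteq> a" for k
    using that by (simp add: B_def row)
  moreover have "orthogonal (B$a) (A$j)" if "j \<in> S" for j
    using z that by (auto simp: Ba intro: span_base)
  ultimately show ?thesis
    using that by blast
qed

lemma det_orthogonalize_rows:
  fixes A :: "real^'n^'n"
  assumes "finite S"
  obtains B where "det B = det A" "\<And>i. norm (B$i) \<le> norm (A$i)"
    "pairwise (\<lambda>i j. orthogonal (B$i) (B$j)) S"
proof -
  have "\<exists>B. det B = det A \<and> (\<forall>i. norm (B$i) \<le> norm (A$i)) \<and>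
      pairwise (\<lambda>i j. orthogonal (B$i) (B$j)) S"
    using assms
  proof (induction S rule: finite_induct)
    case empty
    show ?case
      by (intro exI[of _ A]) simp
  next
    case (insert a S)
    then obtain B where B: "det B = det A" "\<forall>i. norm (B$i) \<le> norm (A$i)"
      "pairwise (\<lambda>i j. orthogonal (B$i) (B$j)) S"
      by blast
    obtain B' where B': "det B' = det B" "norm (B'$a) \<le> norm (B$a)"
      "\<And>k. k \<noteq> a \<Longrightarrow> B'$k = B$k" "\<And>j. j \<in> S \<Longrightarrow> orthogonal (B'$a) (B$j)"
      using det_orthogonalize_row[OF insert.hyps(2), where A=B] by blast
    have same: "B'$i = B$i" if "i \<in> S" for i
      using insert.hyps(2) that by (intro B'(3)) auto
    have "pairwise (\<lambda>i j. orthogonal (B'$i) (B'$j)) (insert a S)"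
      using B(3) B'(4) by (auto simp: pairwise_insert pairwise_def orthogonal_commute same)
    moreover have "norm (B'$i) \<le> norm (A$i)" for i
      using B(2) B'(2,3) by (metis order_trans)
    ultimately show ?case
      using B(1) B'(1) by auto
  qed
  then show ?thesis
    using that by blast
qed

theorem hadamard_inequality:
  fixes A :: "real^'n^'n"
  shows "\<bar>det A\<bar> \<le> (\<Prod>i\<in>UNIV. norm (A$i))"
proof -
  obtain B where B: "det B = det A" "\<And>i. norm (B$i) \<le> norm (A$i)"
    and orth: "pairwise (\<lambda>i j. orthogonal (B$i) (B$j)) UNIV"
    using det_orthogonalize_rows[of UNIV A] by auto
  have gram: "(B ** transpose B) $ i $ j = B$i \<bullet> B$j" for i j
    by (simp add: matrix_matrix_mult_def transpose_def inner_vec_def mult.commute)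
  have "\<bar>det B\<bar>\<^sup>2 = det (B ** transpose B)"
    by (simp add: det_mul power2_eq_square)
  also have "\<dots> = (\<Prod>i\<in>UNIV. B$i \<bullet> B$i)"
    using orth by (subst det_diagonal) (auto simp: gram pairwise_def orthogonal_def)
  also have "\<dots> = (\<Prod>i\<in>UNIV. norm (B$i))\<^sup>2"
    by (simp add: power2_norm_eq_inner prod_power_distrib)
  finally have "\<bar>det B\<bar> = (\<Prod>i\<in>UNIV. norm (B$i))"
    by (rule power2_eq_imp_eq) (auto intro: prod_nonneg)
  also have "\<dots> \<le> (\<Prod>i\<in>UNIV. norm (A$i))"
    using B(2) by (intro prod_mono) auto
  finally show ?thesis
    using B(1) by simp
qed

lemma abs_det_le_entry_bound:
  fixes A :: "real^'n^'n"
  assumes "\<And>i j. \<bar>A$i$j\<bar> \<le> D"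
  shows "\<bar>det A\<bar> \<le> D ^ CARD('n) * sqrt (real CARD('n)) ^ CARD('n)"
proof -
  have row: "norm (A$i) \<le> sqrt (real CARD('n)) * D" for i
  proof -
    have "infnorm (A$i) \<le> D"
      unfolding infnorm_cart using assms by (intro cSup_least) auto
    then show ?thesis
      using norm_le_infnorm[of "A$i"] by (simp add: order_trans mult_left_mono)
  qed
  have "\<bar>det A\<bar> \<le> (\<Prod>i\<in>UNIV. norm (A$i))"
    by (rule hadamard_inequality)
  also have "\<dots> \<le> (\<Prod>i\<in>(UNIV::'n set). sqrt (real CARD('n)) * D)"
    using row by (intro prod_mono) auto
  finally show ?thesis
    by (simp add: power_mult_distrib mult.commute)
qed

lemma det_in_Ints:
  fixes A :: "real^'n^'n"
  assumes "\<And>i j. A$i$j \<in> \<int>"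
  shows "det A \<in> \<int>"
  unfolding det_def using assms by (intro Ints_sum Ints_mult Ints_prod Ints_of_int) auto

lemma cramer_integral_bound:
  fixes M :: "real^'n^'n"
  assumes "\<And>i j. M$i$j \<in> \<int> \<and> \<bar>M$i$j\<bar> \<le> D"
    and "\<And>i. (M *v d)$i \<in> \<int> \<and> \<bar>(M *v d)$i\<bar> \<le> D"
  shows "det M * d$k \<in> \<int>"
    and "\<bar>det M * d$k\<bar> \<le> D ^ CARD('n) * sqrt (real CARD('n)) ^ CARD('n)"
proof -
  let ?Mk = "(\<chi> i j. if j = k then (M *v d)$i else M$i$j) :: real^'n^'n"
  have cramer: "det ?Mk = det M * d$k"
    using cramer_lemma[of k M d] by (simp add: mult.commute)
  have entries: "?Mk$i$j \<in> \<int>" "\<bar>?Mk$i$j\<bar> \<le> D" for i j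
    using assms by auto
  have "det ?Mk \<in> \<int>"
    using entries(1) by (rule det_in_Ints)
  moreover have "\<bar>det ?Mk\<bar> \<le> D ^ CARD('n) * sqrt (real CARD('n)) ^ CARD('n)"
    using entries(2) by (rule abs_det_le_entry_bound)
  ultimately
  show "det M * d$k \<in> \<int>"
    and "\<bar>det M * d$k\<bar> \<le> D ^ CARD('n) * sqrt (real CARD('n)) ^ CARD('n)"
    by (simp_all add: cramer)
qed

lemma independent_extend_by_unit_vectors:
  fixes Y :: "(real^'n) set"
  assumes "independent Y"
  obtains f :: "'n \<Rightarrow> real^'n"
  where "inj f" "Y \<subseteq> range f" "range f \<subseteq> Y \<union> Basis" "det (\<chi> i j. f j $ i) \<noteq> 0"
proof -
  obtain B where B: "Y \<subseteq> B" "B \<subseteq> Y \<union> Basis" "independent B" "Y \<union> Basis \<subseteq> span B"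
    using maximal_independent_subset_extend[of Y "Y \<union> Basis"] assms by blast
  have "span Basis \<subseteq> span B"
    using B(4) by (meson le_sup_iff span_minimal subspace_span)
  then have span_B: "span B = UNIV"
    by (simp add: span_Basis top.extremum_uniqueI)
  have "finite B" "card B = CARD('n)"
    using independent_bound[OF B(3)] basis_card_eq_dim[of B UNIV] B(3) span_B by auto
  then obtain f where f: "bij_betw f (UNIV :: 'n set) B"
    by (metis finite_same_card_bij finite_class.finite_UNIV)
  define M :: "real^'n^'n" where "M = (\<chi> i j. f j $ i)"
  have "columns M = B"
    using f by (auto simp: columns_def column_def M_def bij_betw_def vec_lambda_eta)
  then have "det M \<noteq> 0"
    using span_B
    by (simp add: invertible_det_nz[symmetric] invertible_right_inverse
        matrix_right_invertible_span_columns span_vec_eq)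
  then show ?thesis
    using that f B(1,2) by (auto simp: M_def bij_betw_def)
qed

lemma nonneg_independent_combination_integral_scaling:
  fixes Y :: "(real^'n) set" and v :: "real^'n"
  assumes "D \<ge> 1" "independent Y" "\<forall>w\<in>insert v Y. \<forall>i. w$i \<in> \<int> \<and> \<bar>w$i\<bar> \<le> D"
    and "\<forall>y\<in>Y. c y \<ge> 0" "v = (\<Sum>y\<in>Y. c y *\<^sub>R y)"
  obtains s :: nat and \<mu> :: "real^'n \<Rightarrow> nat"
  where "s > 0" "real s \<le> D ^ CARD('n) * sqrt (real CARD('n)) ^ CARD('n)"
    "\<forall>y\<in>Y. real (\<mu> y) \<le> D ^ CARD('n) * sqrt (real CARD('n)) ^ CARD('n)"
    "real s *\<^sub>R v = (\<Sum>y\<in>Y. real (\<mu> y) *\<^sub>R y)"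
proof -
  let ?bound = "D ^ CARD('n) * sqrt (real CARD('n)) ^ CARD('n)"
  obtain f where f: "inj f" "Y \<subseteq> range f" "range f \<subseteq> Y \<union> Basis"
    and det: "det (\<chi> i j. f j $ i) \<noteq> 0"
    using independent_extend_by_unit_vectors[OF assms(2)] by blast
  define M :: "real^'n^'n" where "M = (\<chi> i j. f j $ i)"
  define d :: "real^'n" where "d = (\<chi> j. if f j \<in> Y then c (f j) else 0)"
  have "M *v d = (\<Sum>j\<in>UNIV. d$j *\<^sub>R f j)"
    by (simp add: matrix_mult_sum M_def column_def scalar_mult_eq_scaleR vec_lambda_eta)
  also have "\<dots> = (\<Sum>y\<in>range f. (if y \<in> Y then c y else 0) *\<^sub>R y)"
    using f(1) by (simp add: d_def sum.reindex)
  also have "\<dots> = (\<Sum>y\<in>Y. c y *\<^sub>R y)"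
    using f(2) by (intro sum.mono_neutral_cong_right) auto
  finally have Md: "M *v d = v"
    using assms(5) by simp
  have entries: "M$i$j \<in> \<int> \<and> \<bar>M$i$j\<bar> \<le> D" for i j
  proof (cases "f j \<in> Y")
    case True
    then show ?thesis
      using assms(3) by (simp add: M_def)
  next
    case False
    then obtain l where "f j = axis l 1"
      using f(3) by (auto simp: Basis_vec_def)
    then show ?thesis
      using assms(1) by (auto simp: M_def axis_def)
  qed
  have scaled: "det M * c y \<in> \<int>" "\<bar>det M * c y\<bar> \<le> ?bound" if y: "y \<in> Y" for y
  proof -
    obtain k where "y = f k"
      using f(2) y by blast
    then have "d$k = c y"
      using y by (simp add: d_def)
    then show "det M * c y \<in> \<int>" "\<bar>det M * c y\<bar> \<le> ?bound"
      using cramer_integral_bound[of M D d k] entries assms(3) by (simp_all add: Md)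
  qed
  define s where "s = nat \<lfloor>\<bar>det M\<bar>\<rfloor>"
  define \<mu> where "\<mu> y = nat \<lfloor>\<bar>det M * c y\<bar>\<rfloor>" for y
  have s: "real s = \<bar>det M\<bar>"
    unfolding s_def using entries by (intro real_nat_floor_Ints Ints_abs det_in_Ints) auto
  have \<mu>: "real (\<mu> y) = \<bar>det M\<bar> * c y" if y: "y \<in> Y" for y
  proof -
    have "real (\<mu> y) = \<bar>det M * c y\<bar>"
      unfolding \<mu>_def using scaled(1)[OF y] by (intro real_nat_floor_Ints Ints_abs) auto
    then show ?thesis
      using assms(4) y by (simp add: abs_mult)
  qed
  show ?thesis
  proof (rule that)
    show "s > 0"
      using s det by (simp add: M_def)
    show "real s \<le> ?bound"
      unfolding s using entries by (intro abs_det_le_entry_bound) auto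
    show "\<forall>y\<in>Y. real (\<mu> y) \<le> ?bound"
      using \<mu> scaled(2) assms(4) by (simp add: abs_mult)
    show "real s *\<^sub>R v = (\<Sum>y\<in>Y. real (\<mu> y) *\<^sub>R y)"
      using \<mu> by (simp add: s assms(5) scaleR_sum_right)
  qed
qed

theorem lemma11:
  fixes X :: "(real ^ 'n) set" and x :: "real ^ 'n" and \<Delta> :: nat
  assumes "\<Delta> > 0"
    and "\<forall>v\<in>X. \<forall>i. v $ i \<in> \<int> \<and> \<bar>v $ i\<bar> \<le> real \<Delta>"
    and "x \<in> X"
    and "- x \<in> pcone (X - {x})"
  shows "\<exists>(lam :: real ^ 'n \<Rightarrow> nat).
           lam x > 0
         \<and> card {y\<in>X. lam y \<noteq> 0} \<le> CARD('n) + 1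
         \<and> (\<forall>y\<in>X. real (lam y) \<le> real \<Delta> ^ CARD('n) * sqrt (real CARD('n)) ^ CARD('n))
         \<and> - (real (lam x) *\<^sub>R x) = (\<Sum>y\<in>X - {x}. real (lam y) *\<^sub>R y)"
proof -
  have X: "finite X"
    using assms(2) by (intro finite_subset[OF _ finite_bounded_integer_vectors]) auto
  obtain c where c: "\<forall>y\<in>X - {x}. c y \<ge> 0" "- x = (\<Sum>y\<in>X - {x}. c y *\<^sub>R y)"
    using assms(4) unfolding pcone_def by blast
  obtain Y c' where Y: "Y \<subseteq> X - {x}" "independent Y" "\<forall>y\<in>Y. c' y \<ge> 0"
    and "(\<Sum>y\<in>Y. c' y *\<^sub>R y) = (\<Sum>y\<in>X - {x}. c y *\<^sub>R y)"
    using conic_caratheodory[OF finite_Diff[OF X] c(1)] by blast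
  then have comb: "- x = (\<Sum>y\<in>Y. c' y *\<^sub>R y)"
    using c(2) by simp
  have entries: "\<forall>w\<in>insert (- x) Y. \<forall>i. w$i \<in> \<int> \<and> \<bar>w$i\<bar> \<le> real \<Delta>"
    using assms(2,3) Y(1) by auto
  have "real \<Delta> \<ge> 1"
    using assms(1) by simp
  then obtain s \<mu> where s: "s > 0" "real s \<le> real \<Delta> ^ CARD('n) * sqrt (real CARD('n)) ^ CARD('n)"
    and \<mu>: "\<forall>y\<in>Y. real (\<mu> y) \<le> real \<Delta> ^ CARD('n) * sqrt (real CARD('n)) ^ CARD('n)"
    and scaled: "real s *\<^sub>R - x = (\<Sum>y\<in>Y. real (\<mu> y) *\<^sub>R y)"
    using nonneg_independent_combination_integral_scaling[OF _ Y(2) entries Y(3) comb] by blast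
  define lam where "lam = (\<lambda>y. if y \<in> Y then \<mu> y else 0)(x := s)"
  have "{y\<in>X. lam y \<noteq> 0} \<subseteq> insert x Y"
    by (auto simp: lam_def)
  then have "card {y\<in>X. lam y \<noteq> 0} \<le> card (insert x Y)"
    using independent_bound[OF Y(2)] by (intro card_mono) auto
  also have "\<dots> \<le> CARD('n) + 1"
    using independent_bound[OF Y(2)] by (simp add: card_insert_if)
  finally have card: "card {y\<in>X. lam y \<noteq> 0} \<le> CARD('n) + 1" .
  have "(\<Sum>y\<in>X - {x}. real (lam y) *\<^sub>R y) = (\<Sum>y\<in>Y. real (\<mu> y) *\<^sub>R y)"
    using X Y(1) by (intro sum.mono_neutral_cong_right) (auto simp: lam_def)
  then show ?thesis
    using s \<mu> scaled card by (intro exI[of _ lam]) (auto simp: lam_def)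
qed

end
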